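(* Let $\mathcal{C}\le\mathbb{F}_q^n$ be a linear code with $q\neq 2$, and assume every codeword of $\mathcal{C}$ has even weight. Let $c\in\mathcal{C}$ be a codeword of weight $2$ with support $\{i,j\}$, and let $x\in\mathcal{C}$ be arbitrary. Then there exists $\lambda\in\mathbb{F}_q$ such that $(x_i,x_j)=(\lambda c_i,\lambda c_j)$.
   Context: The support of $c\in\mathbb{F}_q^n$ is $\{k: c_k\neq 0\}$ and its weight is the size of its support. *)

theory Defs
  imports Main
begin

text \<open>Vectors of \<open>F_q^n\<close> are modelled as functions \<open>'n \<Rightarrow> 'a\<close> with a finite index type \<open>'n\<close>
  (of cardinality n) and a finite field \<open>'a\<close> (of cardinality q).\<close>

definition supp :: "('n \<Rightarrow> 'a::zero) \<Rightarrow> 'n set" where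
  "supp c = {k. c k \<noteq> 0}"

definition weight :: "('n::finite \<Rightarrow> 'a::zero) \<Rightarrow> nat" where
  "weight c = card (supp c)"

definition linear_code :: "('n \<Rightarrow> 'a::field) set \<Rightarrow> bool" where
  "linear_code C \<longleftrightarrow> (\<lambda>_. 0) \<in> C \<and>
     (\<forall>x\<in>C. \<forall>y\<in>C. (\<lambda>k. x k + y k) \<in> C) \<and>
     (\<forall>a. \<forall>x\<in>C. (\<lambda>k. a * x k) \<in> C)"

end

theory Submission
  imports Defs
begin

text \<open>Suppose \<open>(x i, x j)\<close> were not proportional to \<open>(c i, c j)\<close>. The codewords \<open>x + t c\<close> all
  agree with \<open>x\<close> outside \<open>{i, j}\<close>, so their weights differ only through the number of nonzero
  coordinates among \<open>i, j\<close>. The value \<open>t = -x i / c i\<close> kills coordinate \<open>i\<close> but, by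
  non-proportionality, not coordinate \<open>j\<close>; since \<open>q \<noteq> 2\<close> there is a third scalar \<open>t\<close> that
  kills neither. The two weights then differ by one, so one of them is odd.\<close>

lemma linear_code_add_smult:
  assumes "linear_code C" and "x \<in> C" and "c \<in> C"
  shows "(\<lambda>k. x k + t * c k) \<in> C"
proof -
  have "(\<lambda>k. t * c k) \<in> C" using assms(1,3) unfolding linear_code_def by blast
  with assms(1,2) show ?thesis unfolding linear_code_def by fastforce
qed

lemma weight_eq_card_Diff_plus_card_Int:
  fixes y :: "'n::finite \<Rightarrow> 'a::zero"
  shows "weight y = card (supp y - S) + card (supp y \<inter> S)"
  unfolding weight_def using card_Int_Diff[of "supp y" S] by simp

lemma supp_add_smult_Diff:
  fixes c x :: "'n \<Rightarrow> 'a::semiring_0"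
  assumes "supp c \<subseteq> S"
  shows "supp (\<lambda>k. x k + t * c k) - S = supp x - S"
  using assms by (force simp: supp_def)

lemma ex_new_if_card_UNIV_neq_2:
  fixes a b :: "'a::zero_neq_one"
  assumes "card (UNIV :: 'a set) \<noteq> 2"
  shows "\<exists>t. t \<noteq> a \<and> t \<noteq> b"
proof (cases "finite (UNIV :: 'a set)")
  case True
  have "card {0::'a, 1} \<le> card (UNIV :: 'a set)" using True by (rule card_mono) simp
  with assms have "card {a, b} \<noteq> card (UNIV :: 'a set)" by (simp add: card_insert_if)
  then have "{a, b} \<noteq> UNIV" by auto
  then show ?thesis by auto
next
  case False
  from ex_new_if_finite[OF False, of "{a, b}"] show ?thesis by auto
qed

lemma add_mult_eq_0_iff:
  fixes x t c :: "'a::field"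
  assumes "c \<noteq> 0"
  shows "x + t * c = 0 \<longleftrightarrow> t = - x / c"
  using assms by (auto simp: add_eq_0_iff2 eq_divide_eq)

theorem lemma3p1:
  fixes C :: "('n::finite \<Rightarrow> 'a::{field,finite}) set"
    and c x :: "'n \<Rightarrow> 'a" and i j :: 'n
  assumes "linear_code C"
    and "card (UNIV :: 'a set) \<noteq> 2"
    and "\<forall>y\<in>C. even (weight y)"
    and "c \<in> C" and "weight c = 2" and "supp c = {i, j}"
    and "x \<in> C"
  shows "\<exists>l::'a. (x i, x j) = (l * c i, l * c j)"
proof (rule ccontr)
  assume not_proportional: "\<not> ?thesis"
  have "i \<noteq> j" using assms(5,6) by (auto simp: weight_def)
  have ci: "c i \<noteq> 0" and cj: "c j \<noteq> 0" using assms(6) by (auto simp: supp_def)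
  define y where "y t = (\<lambda>k. x k + t * c k)" for t
  have weight_y: "weight (y t) = card (supp x - {i, j}) + card (supp (y t) \<inter> {i, j})" for t
    using weight_eq_card_Diff_plus_card_Int[of "y t" "{i, j}"] supp_add_smult_Diff[of c "{i, j}"]
    by (simp add: assms(6) y_def)
  define a where "a = - x i / c i"
  define b where "b = - x j / c j"
  have "y a j \<noteq> 0"
  proof
    assume "y a j = 0"
    then have "x j = - a * c j" by (simp add: y_def add_eq_0_iff2)
    moreover have "x i = - a * c i" using ci by (simp add: a_def)
    ultimately show False using not_proportional by blast
  qed
  then have supp_ya: "supp (y a) \<inter> {i, j} = {j}"
    using ci by (auto simp: supp_def y_def a_def add_mult_eq_0_iff)
  obtain t where "t \<noteq> a" "t \<noteq> b" using ex_new_if_card_UNIV_neq_2 assms(2) by blast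
  then have supp_yt: "supp (y t) \<inter> {i, j} = {i, j}"
    using ci cj by (auto simp: supp_def y_def a_def b_def add_mult_eq_0_iff)
  have "even (weight (y s))" for s
    using assms(3) linear_code_add_smult[OF assms(1,7,4)] by (simp add: y_def)
  moreover have "weight (y t) = weight (y a) + 1"
    using weight_y[of a] weight_y[of t] supp_ya supp_yt \<open>i \<noteq> j\<close> by simp
  ultimately show False by (metis even_plus_one_iff)
qed

end
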